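(* Let $T\ge2$. Let $\Phi$ be the $T\times T$ matrix with $\Phi_{ij}=1$ if $i>j$ and $\Phi_{ij}=0$ otherwise; let $\mathcal P=I_T-\frac1T\mathbf 1\mathbf 1^*$ be the orthogonal projector onto the hyperplane $V\subset\mathbb R^T$ (or $\mathbb C^T$) orthogonal to $\mathbf 1=(1,\dots,1)^*$; let $\tilde\Phi=\mathcal P\Phi\mathcal P$. Let $F$ be the cyclic lead operator $F(x_1,x_2,\dots,x_T)=(x_2,x_3,\dots,x_T,x_1)$, which preserves $V$, and let $F_V$ denote its restriction to $V$. Then $\tilde\Phi$ preserves $V$, and its restriction to $V$ equals $-(\mathbf 1_V-F_V)^{-1}$, where $\mathbf 1_V$ is the identity operator on $V$. *)

theory Defs
  imports "Jordan_Normal_Form.Matrix"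
begin

definition ones :: "nat \<Rightarrow> real vec" where
  "ones T = vec T (\<lambda>_. 1)"

definition Phi :: "nat \<Rightarrow> real mat" where
  "Phi T = mat T T (\<lambda>(i,j). if i > j then 1 else 0)"

definition Proj :: "nat \<Rightarrow> real mat" where
  "Proj T = 1\<^sub>m T - (1 / real T) \<cdot>\<^sub>m (mat_of_cols T [ones T] * mat_of_rows T [ones T])"

definition PhiTilde :: "nat \<Rightarrow> real mat" where
  "PhiTilde T = Proj T * Phi T * Proj T"

definition V :: "nat \<Rightarrow> real vec set" where
  "V T = {x \<in> carrier_vec T. x \<bullet> ones T = 0}"

definition F :: "nat \<Rightarrow> real vec \<Rightarrow> real vec" where
  "F T x = vec T (\<lambda>i. x $ ((i + 1) mod T))"

end

theory Submission
  imports Defs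
begin

(* For x in V, Phi x is the vector s of partial sums s_i = x_0 + ... + x_(i-1), and
   (s - F s)_i = -x_i: for i < T - 1 trivially, and for i = T - 1 because the x_j sum to 0.
   The projector only shifts s by a constant, which 1 - F annihilates, so (1 - F) PhiTilde = -1
   on V. The kernel of 1 - F consists of the constant vectors, of which only 0 lies in V; hence
   1 - F is injective on V, therefore bijective, and its inverse is -PhiTilde. *)

lemma mem_V_iff: "x \<in> V T \<longleftrightarrow> x \<in> carrier_vec T \<and> (\<Sum>i<T. x $ i) = 0"
  unfolding V_def by (auto simp: scalar_prod_def ones_def lessThan_atLeast0)

lemma Proj_carrier: "Proj T \<in> carrier_mat T T"
  unfolding Proj_def by (intro minus_carrier_mat smult_carrier_mat mult_carrier_mat) auto

lemma Phi_carrier: "Phi T \<in> carrier_mat T T"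
  by (simp add: Phi_def)

lemma Phi_mult_vec:
  assumes "x \<in> carrier_vec T"
  shows "Phi T *\<^sub>v x = vec T (\<lambda>i. \<Sum>j<i. x $ j)"
proof (rule eq_vecI)
  fix i assume "i < dim_vec (vec T (\<lambda>i. \<Sum>j<i. x $ j))"
  then have i: "i < T" by simp
  have "(Phi T *\<^sub>v x) $ i = (\<Sum>j\<in>{..<T} \<inter> {j. j < i}. x $ j)"
    using i assms
    by (auto simp: Phi_def scalar_prod_def lessThan_atLeast0 sum.inter_restrict intro!: sum.cong)
  also have "{..<T} \<inter> {j. j < i} = {..<i}" using i by auto
  finally show "(Phi T *\<^sub>v x) $ i = vec T (\<lambda>i. \<Sum>j<i. x $ j) $ i" using i by simp
qed (simp add: Phi_def)

lemma Proj_mult_vec: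
  assumes "x \<in> carrier_vec T"
  shows "Proj T *\<^sub>v x = vec T (\<lambda>i. x $ i - (\<Sum>j<T. x $ j) / real T)"
proof (rule eq_vecI)
  fix i assume "i < dim_vec (vec T (\<lambda>i. x $ i - (\<Sum>j<T. x $ j) / real T))"
  then have i: "i < T" by simp
  have "(Proj T *\<^sub>v x) $ i = (\<Sum>j<T. (if i = j then x $ j else 0) - x $ j / real T)"
    using i assms
    by (auto simp: Proj_def ones_def mat_of_cols_def mat_of_rows_def scalar_prod_def
        lessThan_atLeast0 algebra_simps intro!: sum.cong)
  also have "\<dots> = x $ i - (\<Sum>j<T. x $ j) / real T"
    using i by (simp add: sum_subtractf sum_divide_distrib)
  finally show "(Proj T *\<^sub>v x) $ i = vec T (\<lambda>i. x $ i - (\<Sum>j<T. x $ j) / real T) $ i"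
    using i by simp
qed (simp add: Proj_def)

lemma Proj_mult_vec_in_V:
  assumes "x \<in> carrier_vec T"
  shows "Proj T *\<^sub>v x \<in> V T"
proof -
  have "(\<Sum>i<T. x $ i - (\<Sum>j<T. x $ j) / real T) = 0"
    by (cases "T = 0") (simp_all add: sum_subtractf)
  then show ?thesis
    using assms by (simp add: mem_V_iff Proj_mult_vec)
qed

lemma Proj_mult_vec_V: "x \<in> V T \<Longrightarrow> Proj T *\<^sub>v x = x"
  by (rule eq_vecI) (auto simp: mem_V_iff Proj_mult_vec)

lemma PhiTilde_mult_vec_V:
  assumes "x \<in> V T"
  shows "PhiTilde T *\<^sub>v x = Proj T *\<^sub>v (Phi T *\<^sub>v x)"
proof -
  have x: "x \<in> carrier_vec T" using assms by (simp add: mem_V_iff)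
  have "PhiTilde T *\<^sub>v x = (Proj T * Phi T) *\<^sub>v (Proj T *\<^sub>v x)"
    unfolding PhiTilde_def
    by (rule assoc_mult_mat_vec[OF mult_carrier_mat[OF Proj_carrier Phi_carrier] Proj_carrier x])
  also have "\<dots> = Proj T *\<^sub>v (Phi T *\<^sub>v x)"
    unfolding Proj_mult_vec_V[OF assms]
    by (rule assoc_mult_mat_vec[OF Proj_carrier Phi_carrier x])
  finally show ?thesis .
qed

lemma uminus_in_V:
  assumes "x \<in> V T"
  shows "- x \<in> V T"
proof -
  have x: "x \<in> carrier_vec T" "(\<Sum>i<T. x $ i) = 0" using assms by (simp_all add: mem_V_iff)
  have "(\<Sum>i<T. (- x) $ i) = (\<Sum>i<T. - x $ i)" by (rule sum.cong) (use x in auto)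
  then show ?thesis using x by (simp add: mem_V_iff sum_negf)
qed

lemma PhiTilde_mult_vec_in_V: "x \<in> V T \<Longrightarrow> PhiTilde T *\<^sub>v x \<in> V T"
  unfolding PhiTilde_mult_vec_V
  by (intro Proj_mult_vec_in_V mult_mat_vec_carrier[OF Phi_carrier]) (simp add: mem_V_iff)

lemma dim_vec_F [simp]: "dim_vec (F T x) = T"
  by (simp add: F_def)

lemma sum_F: "(\<Sum>i<T. F T x $ i) = (\<Sum>i<T. x $ i)"
proof (cases T)
  case (Suc n)
  have "(\<Sum>i<T. F T x $ i) = (\<Sum>i<n. x $ Suc i) + x $ 0"
    using Suc by (simp add: F_def)
  also have "\<dots> = (\<Sum>i<T. x $ i)"
    using Suc sum.lessThan_Suc_shift[of "\<lambda>i. x $ i" n] by simp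
  finally show ?thesis .
qed simp

lemma diff_F_in_V:
  assumes "x \<in> V T"
  shows "x - F T x \<in> V T"
proof -
  have x: "x \<in> carrier_vec T" "(\<Sum>i<T. x $ i) = 0" using assms by (simp_all add: mem_V_iff)
  have "(\<Sum>i<T. (x - F T x) $ i) = (\<Sum>i<T. x $ i - F T x $ i)"
    by (rule sum.cong) (use x in \<open>auto simp: F_def\<close>)
  moreover have "x - F T x \<in> carrier_vec T" using x(1) by (simp add: F_def)
  ultimately show ?thesis using x by (simp add: mem_V_iff sum_subtractf sum_F)
qed

lemma diff_F_uminus: "x \<in> carrier_vec T \<Longrightarrow> (- x) - F T (- x) = - (x - F T x)"
  by (rule eq_vecI) (auto simp: F_def)

lemma diff_F_Proj:
  assumes "x \<in> carrier_vec T"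
  shows "Proj T *\<^sub>v x - F T (Proj T *\<^sub>v x) = x - F T x"
  by (rule eq_vecI) (use assms in \<open>auto simp: Proj_mult_vec F_def\<close>)

lemma diff_F_Phi:
  assumes "x \<in> V T"
  shows "Phi T *\<^sub>v x - F T (Phi T *\<^sub>v x) = - x"
proof (rule eq_vecI)
  have x: "x \<in> carrier_vec T" "(\<Sum>j<T. x $ j) = 0"
    using assms by (simp_all add: mem_V_iff)
  fix i assume "i < dim_vec (- x)"
  then have i: "i < T" using x by simp
  show "(Phi T *\<^sub>v x - F T (Phi T *\<^sub>v x)) $ i = (- x) $ i"
  proof (cases "Suc i < T")
    case True
    then show ?thesis using i x by (simp add: Phi_mult_vec F_def)
  next
    case False
    then have "T = Suc i" using i by simp
    then show ?thesis using x by (simp add: Phi_mult_vec F_def)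
  qed
qed (use assms in \<open>auto simp: mem_V_iff\<close>)

lemma diff_F_PhiTilde:
  assumes "x \<in> V T"
  shows "PhiTilde T *\<^sub>v x - F T (PhiTilde T *\<^sub>v x) = - x"
proof -
  have "Phi T *\<^sub>v x \<in> carrier_vec T"
    using assms mult_mat_vec_carrier[OF Phi_carrier] by (simp add: mem_V_iff)
  then show ?thesis
    using assms by (simp add: PhiTilde_mult_vec_V diff_F_Proj diff_F_Phi)
qed

lemma cyclically_invariant_imp_const:
  fixes f :: "nat \<Rightarrow> 'a"
  assumes "\<And>i. i < T \<Longrightarrow> f i = f ((i + 1) mod T)" "i < T"
  shows "f i = f 0"
  using assms(2)
proof (induction i)
  case (Suc i)
  then show ?case using assms(1)[of i] by simp
qed simp

lemma inj_on_diff_F: "inj_on (\<lambda>x. x - F T x) (V T)"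
proof (rule inj_onI)
  fix a b assume a: "a \<in> V T" and b: "b \<in> V T" and eq: "a - F T a = b - F T b"
  define d where "d i = a $ i - b $ i" for i
  have cyclic: "d i = d ((i + 1) mod T)" if "i < T" for i
    using arg_cong[OF eq, of "\<lambda>v. v $ i"] that a b by (auto simp: d_def F_def mem_V_iff)
  have d_const: "d i = d 0" if "i < T" for i
    using cyclically_invariant_imp_const[of T d, OF cyclic that] .
  have "real T * d 0 = (\<Sum>j<T. d 0)"
    by simp
  also have "\<dots> = (\<Sum>j<T. d j)"
    by (rule sum.cong[OF refl], rule d_const[symmetric]) simp
  also have "\<dots> = (\<Sum>j<T. a $ j) - (\<Sum>j<T. b $ j)"
    by (simp add: d_def sum_subtractf)
  also have "\<dots> = 0"
    using a b by (simp add: mem_V_iff)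
  finally have d_0: "T > 0 \<Longrightarrow> d 0 = 0"
    by simp
  show "a = b"
  proof (rule eq_vecI)
    fix i assume "i < dim_vec b"
    then have i: "i < T" using b by (auto simp: mem_V_iff)
    then show "a $ i = b $ i" using d_const[OF i] d_0 by (simp add: d_def)
  qed (use a b in \<open>auto simp: mem_V_iff\<close>)
qed

theorem lemma1:
  fixes T :: nat
  assumes "T \<ge> 2"
  shows "(\<forall>x \<in> V T. PhiTilde T *\<^sub>v x \<in> V T)
    \<and> bij_betw (\<lambda>x. x - F T x) (V T) (V T)
    \<and> (\<forall>x \<in> V T. PhiTilde T *\<^sub>v x = - (inv_into (V T) (\<lambda>x. x - F T x) x))"
proof -
  let ?g = "\<lambda>x. x - F T x"
  have inverse_in_V: "- (PhiTilde T *\<^sub>v x) \<in> V T" if "x \<in> V T" for x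
    by (intro uminus_in_V PhiTilde_mult_vec_in_V that)
  have right_inverse: "?g (- (PhiTilde T *\<^sub>v x)) = x" if "x \<in> V T" for x
  proof -
    have "PhiTilde T *\<^sub>v x \<in> carrier_vec T"
      using PhiTilde_mult_vec_in_V[OF that] by (simp add: mem_V_iff)
    then show ?thesis
      by (simp add: diff_F_uminus diff_F_PhiTilde[OF that])
  qed
  have "V T \<subseteq> ?g ` V T"
    using image_eqI[where f = ?g, OF right_inverse[symmetric] inverse_in_V] by blast
  then have "?g ` V T = V T"
    using diff_F_in_V by blast
  then have bij: "bij_betw ?g (V T) (V T)"
    using inj_on_diff_F by (simp add: bij_betw_def)
  have "inv_into (V T) ?g x = - (PhiTilde T *\<^sub>v x)" if "x \<in> V T" for x
    by (intro inv_into_f_eq inj_on_diff_F inverse_in_V right_inverse that)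
  then show ?thesis
    using bij PhiTilde_mult_vec_in_V by simp
qed

end
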